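(* Let $a,b\in\mathbb{B}^2$ with $a\neq b$, and let $m=d(\{0\},L[a,b])$ be the Euclidean distance from the origin to the line $L[a,b]$ through $a$ and $b$. Then $$\tan\frac{v_{\mathbb{B}^2}(a,b)}{2}=\frac{\sqrt{1+m}}{\sqrt{1-m}}\,\operatorname{th}\frac{h_{\mathbb{B}^2}(a,b)}{4}.$$
   Context: $\mathbb{B}^2$ is the open unit disk in $\mathbb{C}$ and $\operatorname{th}$ is the hyperbolic tangent. For distinct $a,b\in\mathbb{B}^2$ the Hilbert metric is $h_{\mathbb{B}^2}(a,b)=\log\frac{|u-b||a-v|}{|u-a||b-v|}$, where $u,v$ are the two intersection points of the line $L[a,b]$ with the unit circle, labelled so that $|u-a|<|u-b|$; also $h_{\mathbb{B}^2}(a,a)=0$. The visual angle metric is $v_{\mathbb{B}^2}(a,b)=\sup\{\measuredangle(a,z,b): z\in\partial\mathbb{B}^2\}$, where $\measuredangle(a,z,b)$ is the angle at $z$ between the segments $[z,a]$ and $[z,b]$. *)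

theory Defs
  imports "HOL-Analysis.Analysis"
begin

definition line_through :: "complex \<Rightarrow> complex \<Rightarrow> complex set" where
  "line_through a b = {a + of_real t * (b - a) | t. True}"

definition angle_at :: "complex \<Rightarrow> complex \<Rightarrow> complex \<Rightarrow> real" where
  "angle_at a z b = arccos (((a - z) \<bullet> (b - z)) / (norm (a - z) * norm (b - z)))"

definition visual_angle :: "complex \<Rightarrow> complex \<Rightarrow> real" where
  "visual_angle a b = (SUP z \<in> sphere 0 1. angle_at a z b)"

definition hilbert_disk :: "complex \<Rightarrow> complex \<Rightarrow> real" where
  "hilbert_disk a b =
     (if a = b then 0 else
      (let (u, v) = (SOME (u, v). u \<noteq> v \<and> cmod u = 1 \<and> cmod v = 1 \<and>
                        u \<in> line_through a b \<and> v \<in> line_through a b \<and>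
                        cmod (u - a) < cmod (u - b))
       in ln ((cmod (u - b) * cmod (a - v)) / (cmod (u - a) * cmod (b - v)))))"

end

theory Submission
  imports Defs
begin

(* Take coordinates in which L[a,b] is the x-axis, a = (al,0), b = (be,0) and the unit circle is
   x^2 + (y - m)^2 = 1, so that it cuts the axis in the chord [-s,s], s = sqrt (1 - m^2).
   The angle under which a point of the circle sees [a,b] is largest at the point where the circle
   through a and b on the far side of the axis touches the unit circle from inside; a
   Cauchy-Schwarz argument shows that the unit circle stays outside both circles through a, b
   of that inscribed angle.  The cotangent K of the maximal angle is explicit, and so is the
   Hilbert distance, a logarithmic cross ratio of -s, al, be, s.  Both sides of the identity
   then reduce to the same algebraic expression in m, al, be. *)

lemma affine_nonneg_on_circle:
  fixes A B c m x y :: real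
  assumes "A^2 + B^2 \<le> (c + B*m)^2" and "c + B*m \<ge> 0" and "x^2 + (y - m)^2 = 1"
  shows "c - A*x + B*y \<ge> 0"
proof -
  have "(A^2 + B^2)*(x^2 + (y - m)^2) - (- A*x + B*(y - m))^2 = (A*(y - m) + B*x)^2"
    by algebra
  then have "(- A*x + B*(y - m))^2 \<le> (A^2 + B^2)*(x^2 + (y - m)^2)"
    by (metis diff_ge_0_iff_ge zero_le_power2)
  also have "\<dots> \<le> (c + B*m)^2"
    using assms by simp
  finally have "\<bar>- A*x + B*(y - m)\<bar> \<le> c + B*m"
    using assms(2) by (metis abs_le_square_iff abs_of_nonneg power2_abs)
  then show ?thesis
    by (simp add: algebra_simps abs_le_iff)
qed

lemma sqrt_one_plus_sq_gt_abs: "\<bar>K\<bar> < sqrt (1 + K^2)"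
  using real_sqrt_less_mono[of "K^2" "1 + K^2"] by simp

lemma cot_ratio_bounds: "-1 \<le> K / sqrt (1 + K^2) \<and> K / sqrt (1 + K^2) \<le> 1"
proof -
  have "sqrt (1 + K^2) > 0"
    by (simp add: add_pos_nonneg)
  then show ?thesis
    using sqrt_one_plus_sq_gt_abs[of K] by (simp add: abs_less_iff field_simps)
qed

lemma cos_ge_cot_sin:
  fixes c q K :: real
  assumes cs: "c^2 + q^2 = 1" and q0: "q \<ge> 0" and ge: "c \<ge> K*q"
  shows "c \<ge> K / sqrt (1 + K^2)"
proof -
  define W where "W = sqrt (1 + K^2)"
  have W0: "W > 0" and W2: "W^2 = 1 + K^2"
    unfolding W_def by (simp_all add: add_pos_nonneg)
  have factor: "W^2*c^2 - K^2 = (c - K*q)*(c + K*q)"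
    using W2 cs by algebra
  have "W*c \<ge> K"
  proof (cases "c \<ge> 0")
    case True
    show ?thesis
    proof (cases "K \<le> 0")
      case True
      then show ?thesis
        using \<open>c \<ge> 0\<close> W0 by (smt (verit) mult_nonneg_nonneg)
    next
      case False
      then have "(c - K*q)*(c + K*q) \<ge> 0"
        using q0 \<open>c \<ge> 0\<close> ge by simp
      then have "(W*c)^2 \<ge> K^2"
        using factor by (simp add: power_mult_distrib)
      then show ?thesis
        using W0 True by (meson power2_le_imp_le mult_nonneg_nonneg less_imp_le)
    qed
  next
    case False
    then have "K*q < 0" and "c + K*q < 0"
      using ge by simp_all
    then have "(c - K*q)*(c + K*q) \<le> 0"
      using ge by (simp add: mult_nonneg_nonpos)
    then have "(W*c)^2 \<le> K^2"
      using factor by (simp add: power_mult_distrib)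
    then have "\<bar>W*c\<bar> \<le> \<bar>K\<bar>"
      by (simp add: abs_le_square_iff)
    moreover have "K < 0"
      using \<open>K*q < 0\<close> q0 by (metis mult_nonneg_nonneg not_le)
    ultimately show ?thesis
      by linarith
  qed
  then show ?thesis
    using W0 unfolding W_def by (simp add: field_simps)
qed

(* arccos (K / sqrt (1 + K^2)) is arccot K. *)
lemma arccos_le_arccot:
  fixes c q K :: real
  assumes "c^2 + q^2 = 1" and "q \<ge> 0" and "c \<ge> K*q"
  shows "arccos c \<le> arccos (K / sqrt (1 + K^2))"
proof (rule arccos_le_arccos)
  show "-1 \<le> K / sqrt (1 + K^2)"
    using cot_ratio_bounds by blast
  show "K / sqrt (1 + K^2) \<le> c"
    using cos_ge_cot_sin[OF assms] .
  have "c^2 \<le> 1^2"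
    using assms(1) by (metis le_add_same_cancel1 one_power2 zero_le_power2)
  then show "c \<le> 1"
    using abs_le_square_iff[of c 1] by simp
qed

lemma cos_eq_cot_sin:
  fixes c q K :: real
  assumes cs: "c^2 + q^2 = 1" and q0: "q > 0" and eq: "c = K*q"
  shows "c = K / sqrt (1 + K^2)"
proof -
  define W where "W = sqrt (1 + K^2)"
  have W0: "W > 0" and W2: "W^2 = 1 + K^2"
    unfolding W_def by (simp_all add: add_pos_nonneg)
  have "(q*W)^2 = 1^2"
    using cs W2 eq by (simp add: power_mult_distrib) algebra
  then have "q*W = 1"
    using q0 W0 by (metis power2_eq_imp_eq mult_pos_pos less_imp_le zero_le_one)
  then show ?thesis
    using eq W0 unfolding W_def by (simp add: field_simps)
qed

lemma tan_half_arccos_cot: "tan (arccos (K / sqrt (1 + K^2)) / 2) = sqrt (1 + K^2) - K"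
proof -
  define W where "W = sqrt (1 + K^2)"
  have W0: "W > 0" and W2: "W^2 = 1 + K^2"
    unfolding W_def by (simp_all add: add_pos_nonneg)
  have KW: "\<bar>K\<bar> < W"
    unfolding W_def by (rule sqrt_one_plus_sq_gt_abs)
  have bounds: "-1 \<le> K/W" "K/W \<le> 1"
    using cot_ratio_bounds[of K] unfolding W_def by auto
  have "1 - (K/W)^2 = (1/W)^2"
  proof -
    have "1 + K^2 \<noteq> 0"
      by (smt (verit) zero_le_power2)
    then show ?thesis
      using W0 W2 by (simp add: field_simps)
  qed
  then have sin: "sin (arccos (K/W)) = 1/W"
    using W0 bounds by (simp add: sin_arccos)
  have "tan (arccos (K/W) / 2) = sin (arccos (K/W)) / (cos (arccos (K/W)) + 1)"
    using tan_half[of "arccos (K/W) / 2"] by simp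
  also have "\<dots> = 1/(K + W)"
    unfolding sin cos_arccos[OF bounds] using W0 KW by (simp add: field_simps)
  also have "\<dots> = W - K"
  proof -
    have "(W - K)*(W + K) = 1"
      using W2 by algebra
    moreover have "W + K > 0"
      using KW by linarith
    ultimately show ?thesis
      by (simp add: field_simps)
  qed
  finally show ?thesis
    unfolding W_def .
qed

lemma tanh_quarter_ln_cross_ratio:
  fixes s al be :: real
  assumes s0: "s > 0" and "\<bar>al\<bar> < s" and "\<bar>be\<bar> < s" and ab: "al < be"
  shows "tanh (ln (((s + be)*(s - al)) / ((s + al)*(s - be))) / 4)
           = (s^2 - al*be - sqrt ((s^2 - al^2)*(s^2 - be^2))) / (s*(be - al))"
proof -
  define P where "P = (s + be)*(s - al)"
  define Q where "Q = (s + al)*(s - be)"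
  have P0: "P > 0" and Q0: "Q > 0"
    unfolding P_def Q_def using assms(2,3) by (simp_all add: abs_less_iff)
  define p where "p = sqrt P"
  define q where "q = sqrt Q"
  have p0: "p > 0" "q > 0" and pq2: "p^2 = P" "q^2 = Q"
    unfolding p_def q_def using P0 Q0 by auto
  have "exp (ln (P/Q) / 2)^2 = P/Q"
    using P0 Q0 by (simp add: power2_eq_square exp_add[symmetric])
  then have half: "exp (ln (P/Q) / 2) = p/q"
    unfolding p_def q_def by (metis real_sqrt_divide real_sqrt_unique exp_ge_zero)
  have "tanh (ln (P/Q) / 4) = (1 - exp (-2*(ln (P/Q) / 4))) / (1 + exp (-2*(ln (P/Q) / 4)))"
    by (rule tanh_real_altdef)
  also have "exp (-2*(ln (P/Q) / 4)) = q/p"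
    using half p0 by (simp add: exp_minus)
  also have "(1 - q/p)/(1 + q/p) = (p - q)/(p + q)"
  proof -
    have "1 - q/p = (p - q)/p" "1 + q/p = (p + q)/p"
      using p0 by (simp_all add: diff_divide_distrib add_divide_distrib)
    then show ?thesis
      using p0 by simp
  qed
  also have "\<dots> = (s^2 - al*be - p*q)/(s*(be - al))"
  proof -
    have "(p - q)*(s*(be - al)) = (s^2 - al*be - p*q)*(p + q)"
      using pq2 unfolding P_def Q_def by algebra
    then show ?thesis
      using p0 s0 ab by (simp add: field_simps)
  qed
  also have "p*q = sqrt ((s^2 - al^2)*(s^2 - be^2))"
  proof -
    have "(s^2 - al^2)*(s^2 - be^2) = P*Q"
      unfolding P_def Q_def by algebra
    then show ?thesis
      unfolding p_def q_def by (simp add: real_sqrt_mult)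
  qed
  finally show ?thesis
    unfolding P_def Q_def .
qed

(* The circle (al - x)*(be - x) + y^2 = - K*(be - al)*y through
   a and b, on which [a,b] subtends the angle arccot K below the axis, meets the unit circle on
   the line s^2 + al*be - (al + be)*x + B*y = 0; the choice of B makes this line tangent to the
   unit circle (lemma tangency), i.e. the two circles touch. *)
locale chord_coords =
  fixes m al be :: real
  assumes m_nonneg: "0 \<le> m"
    and al_inside: "al^2 + m^2 < 1" and be_inside: "be^2 + m^2 < 1"
    and al_less_be: "al < be"
begin

definition s :: real where "s = sqrt (1 - m^2)"

definition r :: real where "r = sqrt ((s^2 - al^2)*(s^2 - be^2))"

definition B :: real where "B = ((s^2 + al*be)*m + r) / s^2"

definition K :: real where "K = (B - 2*m) / (be - al)"

definition subtended :: "real \<Rightarrow> real \<Rightarrow> real" where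
  "subtended x y = arccos (((al - x)*(be - x) + y^2) /
                           (sqrt ((al - x)^2 + y^2) * sqrt ((be - x)^2 + y^2)))"

lemma m_sq_less_1: "m^2 < 1"
  using al_inside zero_le_power2[of al] by linarith

lemma m_less_1: "m < 1"
  using m_sq_less_1 power2_less_imp_less[of m 1] by simp

lemma s_sq: "s^2 = 1 - m^2"
  unfolding s_def using m_sq_less_1 by simp

lemma s_pos: "s > 0"
  unfolding s_def using m_sq_less_1 by simp

lemma abs_al_less: "\<bar>al\<bar> < s" and abs_be_less: "\<bar>be\<bar> < s"
  using power2_less_imp_less[of "\<bar>al\<bar>" s] power2_less_imp_less[of "\<bar>be\<bar>" s]
    al_inside be_inside s_sq s_pos by simp_all

lemma abs_al_be_less: "\<bar>al*be\<bar> < s^2"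
  using mult_strict_mono'[OF abs_al_less abs_be_less]
  by (simp add: abs_mult power2_eq_square)

lemma chord_factors_pos: "s^2 - al^2 > 0" "s^2 - be^2 > 0"
  using al_inside be_inside s_sq by simp_all

lemma r_pos: "r > 0" and r_sq: "r^2 = (s^2 - al^2)*(s^2 - be^2)"
  unfolding r_def using chord_factors_pos by simp_all

lemma r_nonneg: "r \<ge> 0"
  using r_pos by simp

lemma r_le: "r \<le> s^2 + al*be"
proof -
  have "(s^2 + al*be)^2 - r^2 = s^2*(al + be)^2"
    using r_sq by algebra
  then have "r^2 \<le> (s^2 + al*be)^2"
    by (metis diff_ge_0_iff_ge zero_le_mult_iff zero_le_power2)
  moreover have "s^2 + al*be > 0"
    using abs_al_be_less by (simp add: abs_less_iff)
  ultimately show ?thesis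
    using power2_le_imp_le by fastforce
qed

lemma r_less: "r < s^2 - al*be"
proof -
  have "(s^2 - al*be)^2 - r^2 = s^2*(al - be)^2"
    using r_sq by algebra
  moreover have "s^2*(al - be)^2 > 0"
    using s_pos al_less_be by simp
  ultimately have "r^2 < (s^2 - al*be)^2"
    by linarith
  then show ?thesis
    using abs_al_be_less by (simp add: abs_less_iff power2_less_imp_less)
qed

lemma B_eq: "s^2 * B = (s^2 + al*be)*m + r"
  using s_pos by (simp add: B_def)

lemma K_eq: "K*(be - al) = B - 2*m"
  using al_less_be by (simp add: K_def)

lemma tangency: "(al + be)^2 + B^2 = (s^2 + al*be + B*m)^2"
proof -
  have "s^2*((al + be)^2 + B^2 - (s^2 + al*be + B*m)^2) = 0"
    using B_eq r_sq s_sq by algebra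
  then show ?thesis
    using s_pos by simp
qed

lemma tangency_pos: "s^2 + al*be + B*m > 0"
proof -
  have "B \<ge> 0"
    using B_eq s_pos m_nonneg r_nonneg abs_al_be_less
    by (smt (verit) mult_nonneg_nonneg zero_le_mult_iff zero_less_power2)
  then show ?thesis
    using abs_al_be_less m_nonneg by (smt (verit) mult_nonneg_nonneg)
qed

lemma dot_on_circle:
  assumes "x^2 + (y - m)^2 = 1"
  shows "(al - x)*(be - x) + y^2 = s^2 + al*be - (al + be)*x + 2*m*y"
  using assms s_sq by algebra

lemma tangent_far_nonneg:
  assumes "x^2 + (y - m)^2 = 1"
  shows "s^2 + al*be - (al + be)*x + B*y \<ge> 0"
  using affine_nonneg_on_circle[OF _ less_imp_le[OF tangency_pos] assms] tangency by simp

(* 4*m - B plays the role of B for the mirror image of the tangent circle in the axis. *)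
lemma tangent_near_nonneg:
  assumes K: "K \<ge> 0" and circ: "x^2 + (y - m)^2 = 1"
  shows "s^2 + al*be - (al + be)*x + (4*m - B)*y \<ge> 0"
proof (rule affine_nonneg_on_circle[OF _ _ circ])
  define C where "C = s^2*(4*m - B) - (s^2 + al*be)*m"
  have "C \<le> r"
  proof -
    have "K*(be - al) \<ge> 0"
      using K al_less_be by simp
    then have "B - 2*m \<ge> 0"
      using K_eq by simp
    then show ?thesis
      unfolding C_def using B_eq s_pos by (smt (verit) mult_left_mono zero_le_power2)
  qed
  moreover have C_ge: "C \<ge> - r"
  proof -
    have "C + r = 2*m*(s^2 - al*be)"
      unfolding C_def using B_eq by algebra
    moreover have "2*m*(s^2 - al*be) \<ge> 0"
      using m_nonneg abs_al_be_less by (simp add: abs_less_iff)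
    ultimately show ?thesis
      by linarith
  qed
  ultimately have "C^2 \<le> r^2"
    using abs_le_square_iff[of C r] r_nonneg by (simp add: abs_le_iff)
  moreover have "s^2*((s^2 + al*be + (4*m - B)*m)^2 - (al + be)^2 - (4*m - B)^2) = r^2 - C^2"
    unfolding C_def using r_sq s_sq B_eq by algebra
  ultimately show "(al + be)^2 + (4*m - B)^2 \<le> (s^2 + al*be + (4*m - B)*m)^2"
    using s_pos by (smt (verit) zero_le_mult_iff zero_less_power2)
  have "s^2*(s^2 + al*be + (4*m - B)*m) = (s^2 + al*be)*(s^2) + m*C + (s^2 + al*be)*m^2"
    unfolding C_def by algebra
  also have "\<dots> = (s^2 + al*be) + m*C"
    using s_sq by algebra
  also have "\<dots> \<ge> (s^2 + al*be) - m*r"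
    using mult_left_mono[OF C_ge m_nonneg] by simp
  finally have "s^2*(s^2 + al*be + (4*m - B)*m) \<ge> 0"
    using r_le m_less_1 m_nonneg r_nonneg mult_right_mono[of m 1 r] by linarith
  then show "s^2 + al*be + (4*m - B)*m \<ge> 0"
    using s_pos by (simp add: zero_le_mult_iff)
qed

lemma cot_bound_on_circle:
  assumes circ: "x^2 + (y - m)^2 = 1"
  shows "(al - x)*(be - x) + y^2 \<ge> K*(be - al)*\<bar>y\<bar>"
proof -
  note dot = dot_on_circle[OF circ]
  note far = tangent_far_nonneg[OF circ]
  have By: "B*y = 2*m*y + K*(be - al)*y"
    using K_eq by (metis add.commute diff_add_cancel distrib_right)
  consider "y < 0" | "y \<ge> 0" "K < 0" | "y \<ge> 0" "K \<ge> 0"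
    by linarith
  then show ?thesis
  proof cases
    case 1
    then have "K*(be - al)*\<bar>y\<bar> = - (K*(be - al)*y)"
      by simp
    then show ?thesis
      using far dot By by linarith
  next
    case 2
    then have "K*(be - al)*y \<le> 0"
      using al_less_be by (simp add: mult_nonpos_nonneg)
    then show ?thesis
      using 2 far dot By by simp
  next
    case 3
    have "(4*m - B)*y = 4*m*y - B*y"
      by (simp add: left_diff_distrib)
    moreover have "\<bar>y\<bar> = y"
      using 3 by simp
    ultimately show ?thesis
      using tangent_near_nonneg[OF 3(2) circ] dot By by linarith
  qed
qed

lemma cot_bound_attained:
  obtains x y where "x^2 + (y - m)^2 = 1" and "y < 0"
    and "(al - x)*(be - x) + y^2 = K*(be - al)*\<bar>y\<bar>"
proof -
  define L where "L = s^2 + al*be + B*m"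
  have L0: "L > 0"
    unfolding L_def by (rule tangency_pos)
  have L_sq: "(al + be)^2 + B^2 = L^2"
    unfolding L_def by (rule tangency)
  define x where "x = (al + be)/L"
  define y where "y = m - B/L"
  have circ: "x^2 + (y - m)^2 = 1"
    using L_sq L0 unfolding x_def y_def by (simp add: power_divide add_divide_distrib[symmetric])
  have "s^2*(B - m*L) = s^2*r"
    using B_eq s_sq unfolding L_def by algebra
  then have "B - m*L = r"
    using s_pos by simp
  then have "y < 0"
    unfolding y_def using r_pos L0 by (simp add: field_simps)
  have "s^2 + al*be - (al + be)*x + B*y = L - ((al + be)^2 + B^2)/L"
    unfolding x_def y_def L_def by (simp add: diff_divide_distrib add_divide_distrib power2_eq_square algebra_simps)
  also have "\<dots> = 0"
    using L0 L_sq by (simp add: power2_eq_square)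
  moreover have "B*y = 2*m*y + K*(be - al)*y"
    using K_eq by (metis add.commute diff_add_cancel distrib_right)
  ultimately have "(al - x)*(be - x) + y^2 = K*(be - al)*\<bar>y\<bar>"
    using dot_on_circle[OF circ] \<open>y < 0\<close> by simp
  with circ \<open>y < 0\<close> show thesis
    by (rule that)
qed

lemma subtended_cos_sin:
  assumes "(al - x)^2 + y^2 > 0" and "(be - x)^2 + y^2 > 0"
  defines "P \<equiv> sqrt ((al - x)^2 + y^2) * sqrt ((be - x)^2 + y^2)"
  shows "(((al - x)*(be - x) + y^2)/P)^2 + (\<bar>y\<bar>*(be - al)/P)^2 = 1"
proof -
  have "P > 0"
    unfolding P_def using assms by simp
  have "P^2 = ((al - x)^2 + y^2)*((be - x)^2 + y^2)"
    unfolding P_def using assms by (simp add: power_mult_distrib)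
  also have "\<dots> = ((al - x)*(be - x) + y^2)^2 + (\<bar>y\<bar>*(be - al))^2"
    by (simp add: power_mult_distrib) algebra
  finally have "((al - x)*(be - x) + y^2)^2 + (\<bar>y\<bar>*(be - al))^2 = P^2" ..
  then show ?thesis
    using \<open>P > 0\<close> by (simp add: power_divide add_divide_distrib[symmetric])
qed

lemma subtended_le:
  assumes circ: "x^2 + (y - m)^2 = 1"
    and pos: "(al - x)^2 + y^2 > 0" "(be - x)^2 + y^2 > 0"
  shows "subtended x y \<le> arccos (K / sqrt (1 + K^2))"
proof -
  define P where "P = sqrt ((al - x)^2 + y^2) * sqrt ((be - x)^2 + y^2)"
  have "P > 0"
    unfolding P_def using pos by simp
  then have "(K*(be - al)*\<bar>y\<bar>)/P \<le> ((al - x)*(be - x) + y^2)/P"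
    using divide_right_mono[OF cot_bound_on_circle[OF circ]] by simp
  then have "((al - x)*(be - x) + y^2)/P \<ge> K*(\<bar>y\<bar>*(be - al)/P)"
    by (simp add: mult_ac)
  moreover have "\<bar>y\<bar>*(be - al)/P \<ge> 0"
    using \<open>P > 0\<close> al_less_be by simp
  ultimately show ?thesis
    unfolding subtended_def
    using arccos_le_arccot subtended_cos_sin[OF pos] unfolding P_def by blast
qed

lemma subtended_max_attained:
  obtains x y where "x^2 + (y - m)^2 = 1" and "y \<noteq> 0"
    and "subtended x y = arccos (K / sqrt (1 + K^2))"
proof -
  obtain x y where circ: "x^2 + (y - m)^2 = 1" and "y < 0"
    and eq: "(al - x)*(be - x) + y^2 = K*(be - al)*\<bar>y\<bar>"
    by (rule cot_bound_attained)
  have pos: "(al - x)^2 + y^2 > 0" "(be - x)^2 + y^2 > 0"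
    using \<open>y < 0\<close> by (simp_all add: add_nonneg_pos)
  define P where "P = sqrt ((al - x)^2 + y^2) * sqrt ((be - x)^2 + y^2)"
  have "P > 0"
    unfolding P_def using pos by simp
  then have "((al - x)*(be - x) + y^2)/P = K*(\<bar>y\<bar>*(be - al)/P)"
    using eq by simp
  moreover have "\<bar>y\<bar>*(be - al)/P > 0"
    using \<open>P > 0\<close> \<open>y < 0\<close> al_less_be by (intro divide_pos_pos mult_pos_pos) auto
  ultimately have "subtended x y = arccos (K / sqrt (1 + K^2))"
    unfolding subtended_def
    using cos_eq_cot_sin subtended_cos_sin[OF pos] unfolding P_def by metis
  with circ \<open>y < 0\<close> show thesis
    using that by simp
qed

lemma sqrt_one_plus_K_sq_minus_K:
  "sqrt (1 + K^2) - K = (s^2 - al*be - r) / ((1 - m)*(be - al))"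
proof -
  define N where "N = s^2 - al*be - r"
  define u where "u = (1 - m)*(be - al)"
  define T where "T = N/u"
  have "N > 0" and "u > 0"
    unfolding N_def u_def using r_less m_less_1 al_less_be by simp_all
  then have T0: "T > 0"
    unfolding T_def by simp
  have "(1 + m)*(2*N*u*K - (u^2 - N^2)) = 0"
    using K_eq B_eq s_sq r_sq unfolding N_def u_def by algebra
  then have "2*N*u*K = u^2 - N^2"
    using m_nonneg by simp
  then have "K = (u^2 - N^2)/(2*N*u)"
    using \<open>N > 0\<close> \<open>u > 0\<close> by (simp add: field_simps)
  also have "\<dots> = (1 - T^2)/(2*T)"
    unfolding T_def using \<open>N > 0\<close> \<open>u > 0\<close> by (simp add: field_simps power2_eq_square)
  finally have K_T: "K = (1 - T^2)/(2*T)" .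
  have "1 + K^2 = ((1 + T^2)/(2*T))^2"
    unfolding K_T using T0 by (simp add: field_simps power2_eq_square)
  then have "sqrt (1 + K^2) = (1 + T^2)/(2*T)"
    using T0 by simp
  then have "sqrt (1 + K^2) - K = T"
    unfolding K_T using T0 by (simp add: field_simps power2_eq_square)
  then show ?thesis
    unfolding T_def N_def u_def .
qed

lemma tan_half_max_subtended:
  "tan (arccos (K / sqrt (1 + K^2)) / 2) =
     sqrt (1 + m) / sqrt (1 - m) * tanh (ln (((s + be)*(s - al)) / ((s + al)*(s - be))) / 4)"
proof -
  have s_split: "s = sqrt (1 - m) * sqrt (1 + m)"
    unfolding s_def by (simp add: real_sqrt_mult[symmetric] power2_eq_square algebra_simps)
  have frac: "N/((q*q)*d) = p/q * (N/((q*p)*d))" if "p > 0" "q > 0" "d > 0" for p q d N :: real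
    using that by (simp add: field_simps)
  have rescale: "N/((1 - m)*(be - al)) = sqrt (1 + m)/sqrt (1 - m) * (N/(s*(be - al)))" for N
    using frac[of "sqrt (1 + m)" "sqrt (1 - m)" "be - al" N] m_less_1 m_nonneg al_less_be
    unfolding s_split by simp
  show ?thesis
    unfolding tan_half_arccos_cot sqrt_one_plus_K_sq_minus_K rescale
      tanh_quarter_ln_cross_ratio[OF s_pos abs_al_less abs_be_less al_less_be] r_def ..
qed

end

lemma inner_complex_orthonormal:
  fixes z w e :: complex
  assumes "cmod e = 1"
  shows "z \<bullet> w = (z \<bullet> e)*(w \<bullet> e) + (z \<bullet> (\<i>*e))*(w \<bullet> (\<i>*e))"
proof -
  have "(Re e)^2 + (Im e)^2 = 1"
    using assms by (simp add: cmod_def)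
  then show ?thesis
    unfolding inner_complex_def by simp algebra
qed

(* e is the direction of b - a and n a unit normal, oriented so that m = - (a \<bullet> n) \<ge> 0;
   the point z has chord coordinates (z \<bullet> e, z \<bullet> n + m). *)
locale disk_frame =
  fixes a b e n :: complex and m al be :: real
  assumes a_in_disk: "cmod a < 1" and b_in_disk: "cmod b < 1" and a_ne_b: "a \<noteq> b"
    and e_unit: "cmod e = 1" and n_rot: "n = \<i> * e \<or> n = - (\<i> * e)"
    and b_minus_a: "b - a = cmod (b - a) *\<^sub>R e"
    and a_dot_n_nonpos: "a \<bullet> n \<le> 0"
    and m_eq: "m = - (a \<bullet> n)" and al_eq: "al = a \<bullet> e" and be_eq: "be = b \<bullet> e"
begin

lemma inner_frame: "z \<bullet> w = (z \<bullet> e)*(w \<bullet> e) + (z \<bullet> n)*(w \<bullet> n)"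
  using n_rot inner_complex_orthonormal[OF e_unit, of z w] by auto

lemma norm_sq_frame: "(cmod z)^2 = (z \<bullet> e)^2 + (z \<bullet> n)^2"
  unfolding power2_norm_eq_inner inner_frame[of z z] by (simp add: power2_eq_square)

lemma frame_eqI:
  assumes "z \<bullet> e = w \<bullet> e" and "z \<bullet> n = w \<bullet> n"
  shows "z = w"
  using norm_sq_frame[of "z - w"] assms by (simp add: inner_diff_left)

lemma frame_inner [simp]: "e \<bullet> e = 1" "n \<bullet> n = 1" "e \<bullet> n = 0" "n \<bullet> e = 0"
  using e_unit n_rot by (auto simp: inner_complex_def cmod_def power2_eq_square algebra_simps)

lemma frame_coords [simp]:
  "(x *\<^sub>R e + y *\<^sub>R n) \<bullet> e = x" "(x *\<^sub>R e + y *\<^sub>R n) \<bullet> n = y"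
  by (simp_all add: inner_add_left)

lemma b_minus_a_inner: "(b - a) \<bullet> e = cmod (b - a)" "(b - a) \<bullet> n = 0"
  using arg_cong[OF b_minus_a, of "\<lambda>w. w \<bullet> e"] arg_cong[OF b_minus_a, of "\<lambda>w. w \<bullet> n"]
  by simp_all

lemma a_dot_n: "a \<bullet> n = - m"
  using m_eq by simp

lemma b_dot_n: "b \<bullet> n = - m"
  using b_minus_a_inner(2) m_eq by (simp add: inner_diff_left)

lemma be_minus_al: "be - al = cmod (b - a)"
  using b_minus_a_inner(1) unfolding al_eq be_eq by (simp add: inner_diff_left)

lemma b_minus_a_frame: "b - a = (be - al) *\<^sub>R e"
  by (subst be_minus_al) (rule b_minus_a)

lemma norm_diff_frame:
  "(cmod (a - z))^2 = (al - z \<bullet> e)^2 + (z \<bullet> n + m)^2"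
  "(cmod (b - z))^2 = (be - z \<bullet> e)^2 + (z \<bullet> n + m)^2"
  using norm_sq_frame[of "a - z"] norm_sq_frame[of "b - z"] b_dot_n
  unfolding al_eq be_eq m_eq by (simp_all add: inner_diff_left power2_commute)

sublocale chord_coords m al be
proof
  show "0 \<le> m"
    using a_dot_n_nonpos m_eq by simp
  have "(cmod a)^2 < 1" "(cmod b)^2 < 1"
    using a_in_disk b_in_disk by (simp_all add: abs_square_less_1)
  then show "al^2 + m^2 < 1" "be^2 + m^2 < 1"
    using norm_sq_frame[of a] norm_sq_frame[of b] b_dot_n unfolding al_eq be_eq m_eq by simp_all
  have "cmod (b - a) > 0"
    using a_ne_b by simp
  then show "al < be"
    using be_minus_al by linarith
qed

lemma line_through_frame: "z \<in> line_through a b \<longleftrightarrow> z \<bullet> n = - m"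
proof
  assume "z \<in> line_through a b"
  then obtain t where "z = a + of_real t * (b - a)"
    unfolding line_through_def by auto
  then have "z = a + (t * (be - al)) *\<^sub>R e"
    by (simp add: b_minus_a_frame scaleR_conv_of_real)
  then show "z \<bullet> n = - m"
    using m_eq by (simp add: inner_add_left)
next
  assume zn: "z \<bullet> n = - m"
  define t where "t = (z \<bullet> e - al) / (be - al)"
  have "z = a + (t * (be - al)) *\<^sub>R e"
    using zn al_less_be unfolding t_def m_eq
    by (intro frame_eqI) (simp_all add: inner_add_left al_eq)
  then show "z \<in> line_through a b"
    unfolding line_through_def b_minus_a_frame by (auto simp: scaleR_conv_of_real)
qed

lemma dist_on_line:
  assumes "z \<bullet> n = - m" and "w \<bullet> n = - m"
  shows "cmod (z - w) = \<bar>z \<bullet> e - w \<bullet> e\<bar>"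
proof -
  have "(cmod (z - w))^2 = (z \<bullet> e - w \<bullet> e)^2"
    using norm_sq_frame[of "z - w"] assms by (simp add: inner_diff_left)
  then show ?thesis
    by (metis norm_ge_zero real_sqrt_abs real_sqrt_unique)
qed

lemma infdist_line: "infdist 0 (line_through a b) = m"
proof -
  have foot: "- m *\<^sub>R n \<in> line_through a b"
    unfolding line_through_frame by simp
  have "infdist 0 (line_through a b) \<le> m"
    using infdist_le[OF foot, of 0] m_nonneg n_rot e_unit by (auto simp: norm_mult)
  moreover have "m \<le> infdist 0 (line_through a b)"
    unfolding infdist_notempty[OF ex_in_conv[THEN iffD1, OF exI, OF foot]]
  proof (rule cINF_greatest)
    show "line_through a b \<noteq> {}"
      using foot by auto
    fix z
    assume "z \<in> line_through a b"
    then have "(cmod z)^2 \<ge> m^2"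
      using norm_sq_frame[of z] line_through_frame by simp
    then show "m \<le> dist 0 z"
      using m_nonneg by (metis dist_0_norm norm_ge_zero power2_le_imp_le)
  qed
  ultimately show ?thesis
    by linarith
qed

lemma angle_at_frame: "angle_at a z b = subtended (z \<bullet> e) (z \<bullet> n + m)"
proof -
  have "(a - z) \<bullet> (b - z) = (al - z \<bullet> e)*(be - z \<bullet> e) + (z \<bullet> n + m)^2"
    using inner_frame[of "a - z" "b - z"] b_dot_n unfolding al_eq be_eq m_eq
    by (simp add: inner_diff_left power2_eq_square algebra_simps)
  moreover have "cmod (a - z) = sqrt ((al - z \<bullet> e)^2 + (z \<bullet> n + m)^2)"
    "cmod (b - z) = sqrt ((be - z \<bullet> e)^2 + (z \<bullet> n + m)^2)"
    using norm_diff_frame by (metis norm_ge_zero real_sqrt_unique)+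
  ultimately show ?thesis
    unfolding angle_at_def subtended_def by simp
qed

lemma on_circle_frame: "cmod z = 1 \<longleftrightarrow> (z \<bullet> e)^2 + ((z \<bullet> n + m) - m)^2 = 1"
proof -
  have "cmod z = 1 \<longleftrightarrow> (cmod z)^2 = 1"
    by (simp add: abs_square_eq_1)
  then show ?thesis
    using norm_sq_frame[of z] by simp
qed

lemma visual_angle_eq: "visual_angle a b = arccos (K / sqrt (1 + K^2))"
  unfolding visual_angle_def
proof (rule cSup_eq_maximum)
  obtain x y where circ: "x^2 + (y - m)^2 = 1" and "y \<noteq> 0"
    and max: "subtended x y = arccos (K / sqrt (1 + K^2))"
    by (rule subtended_max_attained)
  define z where "z = x *\<^sub>R e + (y - m) *\<^sub>R n"
  have "z \<in> sphere 0 1"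
    using circ unfolding z_def on_circle_frame mem_sphere_0 by simp
  moreover have "angle_at a z b = arccos (K / sqrt (1 + K^2))"
    unfolding angle_at_frame z_def using max by simp
  ultimately show "arccos (K / sqrt (1 + K^2)) \<in> (\<lambda>z. angle_at a z b) ` sphere 0 1"
    by (metis image_eqI)
next
  fix v
  assume "v \<in> (\<lambda>z. angle_at a z b) ` sphere 0 1"
  then obtain z where z1: "cmod z = 1" and v: "v = angle_at a z b"
    by auto
  have "a \<noteq> z" "b \<noteq> z"
    using a_in_disk b_in_disk z1 by auto
  then have "(cmod (a - z))^2 > 0" "(cmod (b - z))^2 > 0"
    by simp_all
  then have "(al - z \<bullet> e)^2 + (z \<bullet> n + m)^2 > 0" "(be - z \<bullet> e)^2 + (z \<bullet> n + m)^2 > 0"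
    unfolding norm_diff_frame .
  then show "v \<le> arccos (K / sqrt (1 + K^2))"
    unfolding v angle_at_frame using subtended_le z1 on_circle_frame by blast
qed

lemma circle_on_line:
  assumes "z \<bullet> n = - m"
  shows "cmod z = 1 \<longleftrightarrow> z \<bullet> e = s \<or> z \<bullet> e = - s"
proof -
  have "cmod z = 1 \<longleftrightarrow> (z \<bullet> e)^2 = s^2"
    using assms s_sq unfolding on_circle_frame by auto
  then show ?thesis
    by (simp add: power2_eq_iff)
qed

lemma chord_endpoints:
  "u \<noteq> v \<and> cmod u = 1 \<and> cmod v = 1 \<and> u \<in> line_through a b \<and> v \<in> line_through a b \<and>
     cmod (u - a) < cmod (u - b)
   \<longleftrightarrow> u = (- s) *\<^sub>R e + (- m) *\<^sub>R n \<and> v = s *\<^sub>R e + (- m) *\<^sub>R n"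
  (is "?P \<longleftrightarrow> u = ?u0 \<and> v = ?v0")
proof -
  have u0: "?u0 \<bullet> e = - s" "?u0 \<bullet> n = - m" and v0: "?v0 \<bullet> e = s" "?v0 \<bullet> n = - m"
    by (rule frame_coords)+
  have dists: "cmod (z - a) = \<bar>z \<bullet> e - al\<bar>" "cmod (z - b) = \<bar>z \<bullet> e - be\<bar>"
    if "z \<bullet> n = - m" for z
    using dist_on_line[OF that a_dot_n] dist_on_line[OF that b_dot_n] al_eq be_eq by simp_all
  show ?thesis
  proof
    assume P: ?P
    then have un: "u \<bullet> n = - m" and vn: "v \<bullet> n = - m"
      using line_through_frame by auto
    have "u \<bullet> e = - s"
    proof (rule ccontr)
      assume "u \<bullet> e \<noteq> - s"
      then have "u \<bullet> e = s"
        using P circle_on_line[OF un] by simp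
      then show False
        using P dists[OF un] abs_al_less abs_be_less al_less_be by simp
    qed
    then have "u = ?u0"
      using un u0 by (intro frame_eqI) simp_all
    moreover have "v \<bullet> e = s"
    proof (rule ccontr)
      assume "v \<bullet> e \<noteq> s"
      then have "v \<bullet> e = - s"
        using P circle_on_line[OF vn] by simp
      then have "v = ?u0"
        using vn u0 by (intro frame_eqI) simp_all
      then show False
        using P \<open>u = ?u0\<close> by simp
    qed
    then have "v = ?v0"
      using vn v0 by (intro frame_eqI) simp_all
    ultimately show "u = ?u0 \<and> v = ?v0" ..
  next
    assume "u = ?u0 \<and> v = ?v0"
    then have u: "u \<bullet> e = - s" "u \<bullet> n = - m" and v: "v \<bullet> e = s" "v \<bullet> n = - m"
      using u0 v0 by simp_all
    have "u \<noteq> v"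
      using u v s_pos by auto
    moreover have "cmod u = 1" "cmod v = 1"
      using circle_on_line u v by auto
    moreover have "u \<in> line_through a b" "v \<in> line_through a b"
      using line_through_frame u v by auto
    moreover have "cmod (u - a) < cmod (u - b)"
      using dists[OF u(2)] u abs_al_less abs_be_less al_less_be by simp
    ultimately show ?P
      by blast
  qed
qed

lemma hilbert_disk_eq: "hilbert_disk a b = ln (((s + be)*(s - al)) / ((s + al)*(s - be)))"
proof -
  define u0 where "u0 = (- s) *\<^sub>R e + (- m) *\<^sub>R n"
  define v0 where "v0 = s *\<^sub>R e + (- m) *\<^sub>R n"
  have "(SOME (u, v). u \<noteq> v \<and> cmod u = 1 \<and> cmod v = 1 \<and>
          u \<in> line_through a b \<and> v \<in> line_through a b \<and> cmod (u - a) < cmod (u - b))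
        = (u0, v0)"
    unfolding u0_def v0_def by (rule some_equality) (auto simp: chord_endpoints)
  moreover have u0: "u0 \<bullet> e = - s" "u0 \<bullet> n = - m" and v0: "v0 \<bullet> e = s" "v0 \<bullet> n = - m"
    unfolding u0_def v0_def by (rule frame_coords)+
  then have "cmod (u0 - b) = s + be" "cmod (a - v0) = s - al"
    "cmod (u0 - a) = s + al" "cmod (b - v0) = s - be"
    using dist_on_line[OF u0(2) b_dot_n] dist_on_line[OF a_dot_n v0(2)]
      dist_on_line[OF u0(2) a_dot_n] dist_on_line[OF b_dot_n v0(2)]
      abs_al_less abs_be_less
    unfolding al_eq[symmetric] be_eq[symmetric] by (simp_all add: abs_less_iff)
  ultimately show ?thesis
    unfolding hilbert_disk_def using a_ne_b by simp
qed

end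

lemma disk_frame_exists:
  assumes "cmod a < 1" and "cmod b < 1" and "a \<noteq> b"
  obtains e n where "disk_frame a b e n (- (a \<bullet> n)) (a \<bullet> e) (b \<bullet> e)"
proof -
  define e where "e = (b - a) / of_real (cmod (b - a))"
  define n where "n = (if a \<bullet> (\<i> * e) \<le> 0 then \<i> * e else - (\<i> * e))"
  have "disk_frame a b e n (- (a \<bullet> n)) (a \<bullet> e) (b \<bullet> e)"
  proof
    show "cmod e = 1" "b - a = cmod (b - a) *\<^sub>R e"
      unfolding e_def using assms(3) by (simp_all add: norm_divide scaleR_conv_of_real)
    show "n = \<i> * e \<or> n = - (\<i> * e)" "a \<bullet> n \<le> 0"
      unfolding n_def by auto
  qed (use assms in auto)
  then show thesis
    by (rule that)
qed

theorem theorem1p1: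
  fixes a b :: complex
  assumes "a \<in> ball 0 1" and "b \<in> ball 0 1" and "a \<noteq> b"
  defines "m \<equiv> infdist 0 (line_through a b)"
  shows "tan (visual_angle a b / 2) =
           sqrt (1 + m) / sqrt (1 - m) * tanh (hilbert_disk a b / 4)"
proof -
  obtain e n where "disk_frame a b e n (- (a \<bullet> n)) (a \<bullet> e) (b \<bullet> e)"
    using disk_frame_exists assms(1-3) by (metis mem_ball_0)
  then interpret disk_frame a b e n "- (a \<bullet> n)" "a \<bullet> e" "b \<bullet> e" .
  have "m = - (a \<bullet> n)"
    unfolding m_def by (rule infdist_line)
  then show ?thesis
    unfolding visual_angle_eq hilbert_disk_eq tan_half_max_subtended by simp
qed

end
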